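(* In the setting below, suppose $\|\boldsymbol\Theta^*\|_{2\to\infty}\le C_1$, $\|\mathbf A^*\|_{2\to\infty}\le C_2$, $\|\mathbf A\|_{2\to\infty}\le C_2$, $\sigma_r(\mathcal I_{1,i}(\mathbf A))>0$, and $$\|\mathbf Z_{i\cdot}\mathrm{diag}(\boldsymbol\Omega_{i\cdot})\mathbf A\|+\|\mathbf B_{1,i}(\mathbf A)\|+\beta_{1,i}(\mathbf A)\kappa_3(3C_1C_2)\le\min\Big\{\frac{\sigma_r^2(\mathcal I_{1,i}(\mathbf A))}{4\gamma_{1,i}(\mathbf A)\kappa_3(3C_1C_2)},\ \tfrac12\sigma_r(\mathcal I_{1,i}(\mathbf A))C_1\Big\}$$ (the first term of the minimum read as $+\infty$ if its denominator is $0$). Then there exists $\tilde{\boldsymbol\theta}_i$ with $S_{1,i}(\tilde{\boldsymbol\theta}_i;\mathbf A)=\mathbf 0$ and $$\|\tilde{\boldsymbol\theta}_i-\boldsymbol\theta_i^*\|\le2\sigma_r^{-1}(\mathcal I_{1,i}(\mathbf A))\big\{\|\mathbf Z_{i\cdot}\mathrm{diag}(\boldsymbol\Omega_{i\cdot})\mathbf A\|+\|\mathbf B_{1,i}(\mathbf A)\|+\beta_{1,i}(\mathbf A)\kappa_3(3C_1C_2)\big\},$$ and moreover $\|\tilde{\boldsymbol\theta}_i-\boldsymbol\theta_i^*\|\le C_1$.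
   Context: Deterministic setting: $\phi>0$; $b:\mathbb R\to\mathbb R$ is three times continuously differentiable with $b''>0$; $\boldsymbol\Theta^*\in\mathbb R^{n\times r}$ (rows $\boldsymbol\theta_i^{*T}$), $\mathbf A^*\in\mathbb R^{p\times r}$ (rows $\mathbf a_j^{*T}$), $\mathbf M^*=(m^*_{ij})=\boldsymbol\Theta^*(\mathbf A^* )^T$; $\mathbf A\in\mathbb R^{p\times r}$ with rows $\mathbf a_j^T$; $C_1,C_2>0$; $i\in[n]$ fixed; $y_{ij}\in\mathbb R$ and $\omega_{ij}\in\{0,1\}$ are fixed numbers; $z_{ij}=y_{ij}-b'(m^*_{ij})$, $\mathbf Z_{i\cdot}=(z_{i1},\dots,z_{ip})$, $\mathrm{diag}(\boldsymbol\Omega_{i\cdot})=\mathrm{diag}(\omega_{i1},\dots,\omega_{ip})$. $\kappa_3(\alpha)=\sup_{|x|\le\alpha}|b'''(x)|$. Definitions: $S_{1,i}(\boldsymbol\theta;\mathbf A)=\phi^{-1}\sum_{j=1}^p\omega_{ij}\{y_{ij}-b'(\mathbf a_j^T\boldsymbol\theta)\}\mathbf a_j$; $\mathbf B_{1,i}(\mathbf A)=\sum_{j=1}^p\omega_{ij}b''(m^*_{ij})\mathbf a_j(\mathbf a_j-\mathbf a_j^* )^T\boldsymbol\theta_i^*$; $\mathcal I_{1,i}(\mathbf A)=\sum_{j=1}^p\omega_{ij}b''(m^*_{ij})\mathbf a_j\mathbf a_j^T$; $\beta_{1,i}(\mathbf A)=\sup_{\|\mathbf u\|=1}\sum_j\omega_{ij}((\mathbf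 a_j-\mathbf a_j^* )^T\boldsymbol\theta_i^* )^2|\mathbf a_j^T\mathbf u|$; $\gamma_{1,i}(\mathbf A)=\sup_{\|\mathbf u\|=1}\sum_j\omega_{ij}|\mathbf a_j^T\mathbf u|^3$. $\sigma_r(\cdot)$ is the $r$-th largest singular value; $\|X\|_{2\to\infty}$ the maximal row Euclidean norm. *)

theory Defs
  imports "HOL-Analysis.Analysis"
begin

text \<open>Matrices with rows indexed by a finite type: a matrix X in R^{m x r} is a
  function from row indices to row vectors in R^r.\<close>

definition two_to_inf :: "('m::finite \<Rightarrow> real^'r) \<Rightarrow> real" where
  "two_to_inf X = Max (range (\<lambda>k. norm (X k)))"

text \<open>r-th largest singular value of a square r x r matrix, i.e. the smallest one:
  square root of the smallest eigenvalue of M^T M.\<close>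
definition sigma_min :: "real^'r^'r \<Rightarrow> real" where
  "sigma_min M = sqrt (Min {e. \<exists>v. v \<noteq> 0 \<and> (transpose M ** M) *v v = e *\<^sub>R v})"

definition kappa3 :: "(real \<Rightarrow> real) \<Rightarrow> real \<Rightarrow> real" where
  "kappa3 b3 \<alpha> = (SUP x\<in>{-\<alpha>..\<alpha>}. \<bar>b3 x\<bar>)"

definition S1 :: "real \<Rightarrow> (real \<Rightarrow> real) \<Rightarrow> ('p::finite \<Rightarrow> real) \<Rightarrow> ('p \<Rightarrow> real)
    \<Rightarrow> ('p \<Rightarrow> real^'r) \<Rightarrow> real^'r \<Rightarrow> real^'r" where
  "S1 \<phi> b1 \<omega> y A \<theta> = (1/\<phi>) *\<^sub>R (\<Sum>j\<in>UNIV. (\<omega> j * (y j - b1 (A j \<bullet> \<theta>))) *\<^sub>R A j)"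

definition B1 :: "(real \<Rightarrow> real) \<Rightarrow> ('p::finite \<Rightarrow> real) \<Rightarrow> real^'r \<Rightarrow> ('p \<Rightarrow> real^'r)
    \<Rightarrow> ('p \<Rightarrow> real^'r) \<Rightarrow> real^'r" where
  "B1 b2 \<omega> \<theta>s As A = (\<Sum>j\<in>UNIV. (\<omega> j * b2 (\<theta>s \<bullet> As j) * ((A j - As j) \<bullet> \<theta>s)) *\<^sub>R A j)"

definition I1 :: "(real \<Rightarrow> real) \<Rightarrow> ('p::finite \<Rightarrow> real) \<Rightarrow> real^'r \<Rightarrow> ('p \<Rightarrow> real^'r)
    \<Rightarrow> ('p \<Rightarrow> real^'r) \<Rightarrow> real^'r^'r" where
  "I1 b2 \<omega> \<theta>s As A = (\<chi> k l. \<Sum>j\<in>UNIV. \<omega> j * b2 (\<theta>s \<bullet> As j) * (A j $ k) * (A j $ l))"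

definition beta1 :: "('p::finite \<Rightarrow> real) \<Rightarrow> real^'r \<Rightarrow> ('p \<Rightarrow> real^'r) \<Rightarrow> ('p \<Rightarrow> real^'r) \<Rightarrow> real" where
  "beta1 \<omega> \<theta>s As A = (SUP u\<in>sphere 0 1. \<Sum>j\<in>UNIV. \<omega> j * ((A j - As j) \<bullet> \<theta>s)\<^sup>2 * \<bar>A j \<bullet> u\<bar>)"

definition gamma1 :: "('p::finite \<Rightarrow> real) \<Rightarrow> ('p \<Rightarrow> real^'r) \<Rightarrow> real" where
  "gamma1 \<omega> A = (SUP u\<in>sphere 0 1. \<Sum>j\<in>UNIV. \<omega> j * \<bar>A j \<bullet> u\<bar> ^ 3)"

text \<open>The row vector Z_i diag(Omega_i) A, with z_ij = y_ij - b'(m*_ij).\<close>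
definition ZOA :: "(real \<Rightarrow> real) \<Rightarrow> ('p::finite \<Rightarrow> real) \<Rightarrow> ('p \<Rightarrow> real) \<Rightarrow> real^'r
    \<Rightarrow> ('p \<Rightarrow> real^'r) \<Rightarrow> ('p \<Rightarrow> real^'r) \<Rightarrow> real^'r" where
  "ZOA b1 \<omega> y \<theta>s As A = (\<Sum>j\<in>UNIV. ((y j - b1 (\<theta>s \<bullet> As j)) * \<omega> j) *\<^sub>R A j)"

end

theory Submission
  imports Defs
begin

text \<open>Write \<open>\<delta> = \<theta> - \<theta>\<^sup>*\<close>. A second-order Taylor expansion of \<open>b'\<close> around \<open>m\<^sup>*\<^sub>i\<^sub>j\<close> turns the
  estimating equation into \<open>\<I> \<delta> + \<phi> S(\<theta>\<^sup>* + \<delta>) = Z\<Omega>A - B - R(\<delta>)\<close>, where the remainder obeys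
  \<open>\<parallel>R(\<delta>)\<parallel> \<le> \<kappa>\<^sub>3 (\<gamma> \<parallel>\<delta>\<parallel>\<^sup>2 + \<beta>)\<close> as long as \<open>\<parallel>\<delta>\<parallel> \<le> C\<^sub>1\<close>. Since \<open>\<parallel>\<I> x\<parallel> \<ge> \<sigma>\<^sub>r \<parallel>x\<parallel>\<close>, the map
  \<open>\<delta> \<mapsto> \<delta> + \<I>\<^sup>-\<^sup>1 \<phi> S(\<theta>\<^sup>* + \<delta>)\<close> sends the ball of radius \<open>\<rho> = 2E/\<sigma>\<^sub>r\<close> (E the bracket of the
  theorem) into itself: the smallness condition is exactly \<open>E + \<kappa>\<^sub>3\<gamma>\<rho>\<^sup>2 \<le> \<sigma>\<^sub>r\<rho>\<close>.
  Brouwer's theorem yields a fixed point, which is a root of the score.\<close>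

section \<open>The smallest singular value\<close>

lemma transpose_mult_matrix_vector_inner:
  "((transpose N ** N) *v x) \<bullet> (y::real^'n) = (N *v x) \<bullet> (N *v y)"
  by (metis dot_lmul_matrix matrix_vector_mul_assoc transpose_transpose vector_transpose_matrix)

lemma finite_eigenvalues_symmetric:
  fixes M :: "real^'n^'n"
  assumes sym: "\<And>x y. (M *v x) \<bullet> y = x \<bullet> (M *v y)"
  shows "finite {e. \<exists>v. v \<noteq> 0 \<and> M *v v = e *\<^sub>R v}"
proof -
  define E where "E = {e. \<exists>v. v \<noteq> 0 \<and> M *v v = e *\<^sub>R v}"
  define V where "V e = (SOME v. v \<noteq> 0 \<and> M *v v = e *\<^sub>R v)" for e
  have V: "V e \<noteq> 0 \<and> M *v V e = e *\<^sub>R V e" if "e \<in> E" for e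
    using that unfolding E_def V_def by (metis (mono_tags, lifting) mem_Collect_eq someI_ex)
  have inj: "inj_on V E"
  proof (rule inj_onI)
    fix e e' assume "e \<in> E" "e' \<in> E" "V e = V e'"
    then have "e *\<^sub>R V e = e' *\<^sub>R V e" "V e \<noteq> 0" using V by metis+
    then show "e = e'" by (metis scaleR_cancel_right)
  qed
  \<comment> \<open>eigenvectors of a symmetric matrix for distinct eigenvalues are orthogonal\<close>
  have "pairwise orthogonal (V ` E)"
  proof (clarsimp simp: pairwise_def)
    fix e e' assume ee: "e \<in> E" "e' \<in> E" "V e \<noteq> V e'"
    have "e * (V e \<bullet> V e') = (M *v V e) \<bullet> V e'" using V[OF ee(1)] by simp
    also have "\<dots> = V e \<bullet> (M *v V e')" by (rule sym)
    also have "\<dots> = e' * (V e \<bullet> V e')" using V[OF ee(2)] by simp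
    finally have "(e - e') * (V e \<bullet> V e') = 0" by (simp add: algebra_simps)
    with ee show "orthogonal (V e) (V e')" by (auto simp: orthogonal_def)
  qed
  moreover have "0 \<notin> V ` E" using V by auto
  ultimately have "finite (V ` E)"
    using pairwise_orthogonal_independent finiteI_independent by blast
  then show ?thesis using inj finite_imageD unfolding E_def by blast
qed

lemma transpose_mult_eigenvalue_nonneg:
  fixes N :: "real^'n^'n"
  assumes "v \<noteq> 0" and "(transpose N ** N) *v v = e *\<^sub>R v"
  shows "e \<ge> 0"
proof -
  have "e * (v \<bullet> v) = (N *v v) \<bullet> (N *v v)"
    using transpose_mult_matrix_vector_inner[of N v v] assms(2) by simp
  moreover have "v \<bullet> v > 0" using assms(1) by simp
  ultimately show ?thesis by (metis inner_ge_zero zero_le_mult_iff not_le)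
qed

lemma rayleigh_minimizer_eigenvector:
  fixes N :: "real^'n^'n"
  assumes low: "\<And>v. m * (norm v)\<^sup>2 \<le> (norm (N *v v))\<^sup>2"
    and attained: "(norm (N *v v0))\<^sup>2 = m * (norm v0)\<^sup>2"
  shows "(transpose N ** N) *v v0 = m *\<^sub>R v0"
proof (rule ccontr)
  define Q where "Q x = (norm (N *v x))\<^sup>2 - m * (norm x)\<^sup>2" for x
  define w where "w = (transpose N ** N) *v v0 - m *\<^sub>R v0"
  assume "(transpose N ** N) *v v0 \<noteq> m *\<^sub>R v0"
  then have wp: "(norm w)\<^sup>2 > 0" by (simp add: w_def)
  have Qnn: "Q x \<ge> 0" for x using low[of x] by (simp add: Q_def)
  \<comment> \<open>the quadratic form \<open>Q \<ge> 0\<close> vanishes at \<open>v\<^sub>0\<close>, and \<open>w\<close> is half its gradient there\<close>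
  have expand: "Q (v0 - t *\<^sub>R w) = - 2 * t * (norm w)\<^sup>2 + t\<^sup>2 * Q w" for t
  proof -
    have "(N *v v0) \<bullet> (N *v w) - m * (v0 \<bullet> w) = (norm w)\<^sup>2"
      by (simp add: transpose_mult_matrix_vector_inner[symmetric] w_def inner_diff_left
          power2_norm_eq_inner inner_commute)
    moreover have "(N *v w) \<bullet> (N *v v0) = (N *v v0) \<bullet> (N *v w)" "w \<bullet> v0 = v0 \<bullet> w"
      by (simp_all add: inner_commute)
    ultimately show ?thesis
      using attained
      unfolding Q_def matrix_vector_mult_diff_distrib matrix_vector_mult_scaleR power2_norm_eq_inner
      by (simp add: inner_diff_left inner_diff_right algebra_simps power2_eq_square)
  qed
  define t where "t = (norm w)\<^sup>2 / (Q w + (norm w)\<^sup>2)"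
  have den: "Q w + (norm w)\<^sup>2 > 0" using wp Qnn[of w] by linarith
  have tp: "t > 0" unfolding t_def using wp den by simp
  have "(norm w)\<^sup>2 * Q w \<le> (norm w)\<^sup>2 * (Q w + (norm w)\<^sup>2)"
    by (simp add: algebra_simps)
  then have "t * Q w \<le> (norm w)\<^sup>2"
    unfolding t_def using den by (simp add: pos_divide_le_eq)
  then have "t\<^sup>2 * Q w \<le> t * (norm w)\<^sup>2"
    using tp by (metis mult.assoc mult_left_mono less_imp_le power2_eq_square)
  moreover have "t * (norm w)\<^sup>2 > 0" using tp wp by simp
  ultimately have "Q (v0 - t *\<^sub>R w) < 0" using expand[of t] by linarith
  then show False using Qnn by (simp add: not_less[symmetric])
qed

lemma sigma_min_mult_le_norm:
  fixes N :: "real^'n^'n"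
  shows "sigma_min N * norm x \<le> norm (N *v x)"
proof -
  define E where "E = {e. \<exists>v. v \<noteq> 0 \<and> (transpose N ** N) *v v = e *\<^sub>R v}"
  have finE: "finite E"
    unfolding E_def
    by (rule finite_eigenvalues_symmetric) (metis transpose_mult_matrix_vector_inner inner_commute)
  have "continuous_on (sphere (0::real^'n) 1) (\<lambda>v. (norm (N *v v))\<^sup>2)"
    by (intro continuous_intros linear_continuous_on) (simp add: linear_conv_bounded_linear[symmetric])
  moreover have "sphere (0::real^'n) 1 \<noteq> {}" by simp
  ultimately obtain v0 where "v0 \<in> sphere 0 1"
    and "\<And>v. v \<in> sphere 0 1 \<Longrightarrow> (norm (N *v v0))\<^sup>2 \<le> (norm (N *v v))\<^sup>2"
    using continuous_attains_inf[OF compact_sphere] by blast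
  then have v0: "norm v0 = 1"
    and minimal: "\<And>v. norm v = 1 \<Longrightarrow> (norm (N *v v0))\<^sup>2 \<le> (norm (N *v v))\<^sup>2"
    by auto
  define m where "m = (norm (N *v v0))\<^sup>2"
  have low: "m * (norm v)\<^sup>2 \<le> (norm (N *v v))\<^sup>2" for v
  proof (cases "v = 0")
    case False
    have "m \<le> (norm (N *v ((1 / norm v) *\<^sub>R v)))\<^sup>2" unfolding m_def by (rule minimal) (use False in simp)
    also have "\<dots> = (norm (N *v v))\<^sup>2 / (norm v)\<^sup>2"
      by (simp add: matrix_vector_mult_scaleR power_divide)
    finally show ?thesis using False by (simp add: field_simps)
  qed simp
  have "(transpose N ** N) *v v0 = m *\<^sub>R v0"
    by (rule rayleigh_minimizer_eigenvector[OF low]) (simp add: m_def v0)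
  then have "m \<in> E" unfolding E_def using v0 by (intro CollectI exI[of _ v0] conjI) auto
  then have "Min E \<in> E" "Min E \<le> m" using finE by (auto intro: Min_in)
  then have "0 \<le> Min E" "Min E \<le> m"
    unfolding E_def using transpose_mult_eigenvalue_nonneg by blast+
  then have "(sqrt (Min E) * norm x)\<^sup>2 \<le> (norm (N *v x))\<^sup>2"
    using low[of x] by (simp add: power_mult_distrib) (meson mult_right_mono order_trans zero_le_power2)
  then show ?thesis
    unfolding sigma_min_def E_def[symmetric] by (rule power2_le_imp_le) simp
qed

section \<open>Bounds on the model quantities\<close>

lemma norm_le_two_to_inf: "norm (X k) \<le> two_to_inf (X :: 'm::finite \<Rightarrow> real^'r)"
  unfolding two_to_inf_def by (rule Max_ge) auto

lemma abs_taylor_remainder_le: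
  fixes b1 b2 b3 :: "real \<Rightarrow> real"
  assumes db1: "\<And>x. (b1 has_real_derivative b2 x) (at x)"
    and db2: "\<And>x. (b2 has_real_derivative b3 x) (at x)"
    and x: "\<bar>x\<bar> \<le> \<alpha>" and c: "\<bar>c\<bar> \<le> \<alpha>"
    and K: "\<And>t. \<bar>t\<bar> \<le> \<alpha> \<Longrightarrow> \<bar>b3 t\<bar> \<le> K"
  shows "\<bar>b1 x - b1 c - b2 c * (x - c)\<bar> \<le> K / 2 * (x - c)\<^sup>2"
proof (cases "x = c")
  case False
  define diff where "diff m = (if m = 0 then b1 else if m = 1 then b2 else b3)" for m :: nat
  have "\<exists>t. (if x < c then x < t \<and> t < c else c < t \<and> t < x) \<and>
    b1 x = (\<Sum>m<2. diff m c / fact m * (x - c) ^ m) + diff 2 t / fact 2 * (x - c)\<^sup>2"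
  proof (rule Taylor[of 2 diff b1 "-\<alpha>" \<alpha>])
    show "\<forall>m t. m < 2 \<and> - \<alpha> \<le> t \<and> t \<le> \<alpha> \<longrightarrow> DERIV (diff m) t :> diff (Suc m) t"
      using db1 db2 by (auto simp: diff_def less_2_cases_iff)
  qed (use x c False in \<open>auto simp: diff_def\<close>)
  then obtain t where t: "if x < c then x < t \<and> t < c else c < t \<and> t < x"
    and eq: "b1 x = b1 c + b2 c * (x - c) + b3 t / 2 * (x - c)\<^sup>2"
    by (auto simp: diff_def numeral_2_eq_2)
  have "\<bar>b3 t\<bar> \<le> K" using t x c by (intro K) (auto split: if_splits)
  then show ?thesis using eq by (simp add: abs_mult mult_right_mono)
qed simp

lemma abs_le_kappa3:
  assumes "continuous_on {-\<alpha>..\<alpha>} b3" and "\<bar>t\<bar> \<le> \<alpha>"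
  shows "\<bar>b3 t\<bar> \<le> kappa3 b3 \<alpha>"
proof -
  have "compact ((\<lambda>x. \<bar>b3 x\<bar>) ` {-\<alpha>..\<alpha>})"
    using assms(1) by (intro compact_continuous_image continuous_intros) auto
  then have "bdd_above ((\<lambda>x. \<bar>b3 x\<bar>) ` {-\<alpha>..\<alpha>})"
    by (intro bounded_imp_bdd_above compact_imp_bounded)
  then show ?thesis unfolding kappa3_def using assms(2) by (intro cSUP_upper) auto
qed

lemma kappa3_nonneg:
  assumes "continuous_on {-\<alpha>..\<alpha>} b3" and "\<alpha> \<ge> 0"
  shows "kappa3 b3 \<alpha> \<ge> 0"
  using abs_le_kappa3[OF assms(1), of 0] assms(2) by simp

lemma weighted_sum_le_SUP_sphere:
  fixes A :: "'p::finite \<Rightarrow> 'a::real_inner" and c :: "'p \<Rightarrow> real" and g :: "real \<Rightarrow> real"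
  assumes c: "\<And>j. c j \<ge> 0"
    and g: "\<And>x y. 0 \<le> x \<Longrightarrow> x \<le> y \<Longrightarrow> g x \<le> g y"
    and u: "norm u = 1"
  shows "(\<Sum>j\<in>UNIV. c j * g \<bar>A j \<bullet> u\<bar>) \<le> (SUP v\<in>sphere 0 1. \<Sum>j\<in>UNIV. c j * g \<bar>A j \<bullet> v\<bar>)"
proof (rule cSUP_upper[where f = "\<lambda>v. \<Sum>j\<in>UNIV. c j * g \<bar>A j \<bullet> v\<bar>"])
  show "u \<in> sphere 0 1" using u by simp
  have "(\<Sum>j\<in>UNIV. c j * g \<bar>A j \<bullet> v\<bar>) \<le> (\<Sum>j\<in>UNIV. c j * g (norm (A j)))"
    if "v \<in> sphere 0 1" for v
    using that Cauchy_Schwarz_ineq2[of "A _" v]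
    by (intro sum_mono mult_left_mono g c) auto
  then show "bdd_above ((\<lambda>v. \<Sum>j\<in>UNIV. c j * g \<bar>A j \<bullet> v\<bar>) ` sphere 0 1)"
    by (rule bdd_aboveI2)
qed

lemma sum_le_beta1:
  assumes "\<And>j. w j \<ge> 0" and "norm u = 1"
  shows "(\<Sum>j\<in>UNIV. w j * ((A j - As j) \<bullet> \<theta>s)\<^sup>2 * \<bar>A j \<bullet> u\<bar>) \<le> beta1 w \<theta>s As A"
  unfolding beta1_def
  using weighted_sum_le_SUP_sphere[where g = "\<lambda>x. x" and c = "\<lambda>j. w j * ((A j - As j) \<bullet> \<theta>s)\<^sup>2"] assms
  by simp

lemma sum_le_gamma1:
  assumes "\<And>j. w j \<ge> 0" and "norm u = 1"
  shows "(\<Sum>j\<in>UNIV. w j * \<bar>A j \<bullet> u\<bar> ^ 3) \<le> gamma1 w A"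
  unfolding gamma1_def
  using weighted_sum_le_SUP_sphere[where g = "\<lambda>x. x ^ 3" and c = w] assms
  by (simp add: power_mono)

lemma beta1_nonneg:
  fixes A As :: "'p::finite \<Rightarrow> real^'r::finite"
  assumes "\<And>j. w j \<ge> 0"
  shows "beta1 w \<theta>s As A \<ge> 0"
proof -
  obtain u :: "real^'r" where u: "norm u = 1" using vector_choose_size[of 1] by auto
  moreover have "0 \<le> (\<Sum>j\<in>UNIV. w j * ((A j - As j) \<bullet> \<theta>s)\<^sup>2 * \<bar>A j \<bullet> u\<bar>)"
    by (intro sum_nonneg) (simp add: assms)
  ultimately show ?thesis using sum_le_beta1[of w u A As \<theta>s, OF assms u] by linarith
qed

lemma gamma1_nonneg:
  fixes A :: "'p::finite \<Rightarrow> real^'r::finite"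
  assumes "\<And>j. w j \<ge> 0"
  shows "gamma1 w A \<ge> 0"
proof -
  obtain u :: "real^'r" where u: "norm u = 1" using vector_choose_size[of 1] by auto
  moreover have "0 \<le> (\<Sum>j\<in>UNIV. w j * \<bar>A j \<bullet> u\<bar> ^ 3)"
    by (intro sum_nonneg) (simp add: assms)
  ultimately show ?thesis using sum_le_gamma1[of w u A, OF assms u] by linarith
qed

lemma power2_mult_le_cube_mean:
  fixes x y :: real
  assumes "x \<ge> 0" "y \<ge> 0"
  shows "x\<^sup>2 * y \<le> (2 * x ^ 3 + y ^ 3) / 3"
proof -
  have "2 * x ^ 3 + y ^ 3 - 3 * x\<^sup>2 * y = (x - y)\<^sup>2 * (2 * x + y)"
    by (simp add: algebra_simps power2_eq_square power3_eq_cube)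
  also have "\<dots> \<ge> 0" using assms by simp
  finally show ?thesis by simp
qed

lemma sum_inner_sq_le_gamma1:
  fixes A :: "'p::finite \<Rightarrow> real^'r::finite"
  assumes w: "\<And>j. w j \<ge> 0" and u: "norm u = 1"
  shows "(\<Sum>j\<in>UNIV. w j * (A j \<bullet> d)\<^sup>2 * \<bar>A j \<bullet> u\<bar>) \<le> gamma1 w A * (norm d)\<^sup>2"
proof (cases "d = 0")
  case False
  define v where "v = (1 / norm d) *\<^sub>R d"
  have nv: "norm v = 1" using False by (simp add: v_def)
  have dv: "d = norm d *\<^sub>R v" using False by (simp add: v_def)
  have "(\<Sum>j\<in>UNIV. w j * (A j \<bullet> d)\<^sup>2 * \<bar>A j \<bullet> u\<bar>)
      = (norm d)\<^sup>2 * (\<Sum>j\<in>UNIV. w j * \<bar>A j \<bullet> v\<bar>\<^sup>2 * \<bar>A j \<bullet> u\<bar>)"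
    by (subst dv) (simp add: sum_distrib_left power_mult_distrib algebra_simps)
  also have "\<dots> \<le> (norm d)\<^sup>2 * ((2 * (\<Sum>j\<in>UNIV. w j * \<bar>A j \<bullet> v\<bar> ^ 3) + (\<Sum>j\<in>UNIV. w j * \<bar>A j \<bullet> u\<bar> ^ 3)) / 3)"
  proof (intro mult_left_mono zero_le_power2)
    have "(\<Sum>j\<in>UNIV. w j * \<bar>A j \<bullet> v\<bar>\<^sup>2 * \<bar>A j \<bullet> u\<bar>) \<le> (\<Sum>j\<in>UNIV. w j * ((2 * \<bar>A j \<bullet> v\<bar> ^ 3 + \<bar>A j \<bullet> u\<bar> ^ 3) / 3))"
      unfolding mult.assoc by (intro sum_mono mult_left_mono w power2_mult_le_cube_mean) auto
    then show "(\<Sum>j\<in>UNIV. w j * \<bar>A j \<bullet> v\<bar>\<^sup>2 * \<bar>A j \<bullet> u\<bar>) \<le> (2 * (\<Sum>j\<in>UNIV. w j * \<bar>A j \<bullet> v\<bar> ^ 3) + (\<Sum>j\<in>UNIV. w j * \<bar>A j \<bullet> u\<bar> ^ 3)) / 3"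
      by (simp add: sum_divide_distrib[symmetric] sum_distrib_left sum.distrib[symmetric] algebra_simps)
  qed
  also have "\<dots> \<le> (norm d)\<^sup>2 * gamma1 w A"
    using sum_le_gamma1[of w v A] sum_le_gamma1[of w u A] w nv u by (intro mult_left_mono) auto
  finally show ?thesis by (simp add: mult.commute)
qed simp

lemma norm_le_if_abs_inner_unit_le:
  fixes x :: "'a::euclidean_space"
  assumes le: "\<And>u. norm u = 1 \<Longrightarrow> \<bar>x \<bullet> u\<bar> \<le> c"
  shows "norm x \<le> c"
proof (cases "x = 0")
  case True
  obtain b :: 'a where "b \<in> Basis" using nonempty_Basis by blast
  then show ?thesis using le[of b] True by simp
next
  case False
  then have "norm x = \<bar>x \<bullet> ((1 / norm x) *\<^sub>R x)\<bar>"
    by (simp add: power2_norm_eq_inner[symmetric] power2_eq_square)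
  also have "\<dots> \<le> c" using False by (intro le) simp
  finally show ?thesis .
qed

section \<open>The score equation\<close>

definition score_remainder :: "(real \<Rightarrow> real) \<Rightarrow> (real \<Rightarrow> real) \<Rightarrow> ('p::finite \<Rightarrow> real)
    \<Rightarrow> real^'r \<Rightarrow> ('p \<Rightarrow> real^'r) \<Rightarrow> ('p \<Rightarrow> real^'r) \<Rightarrow> real^'r \<Rightarrow> real^'r" where
  "score_remainder b1 b2 w \<theta>s As A \<theta> =
     (\<Sum>j\<in>UNIV. (w j * (b1 (A j \<bullet> \<theta>) - b1 (\<theta>s \<bullet> As j) - b2 (\<theta>s \<bullet> As j) * (A j \<bullet> \<theta> - \<theta>s \<bullet> As j)))
        *\<^sub>R A j)"

lemma I1_mult_vector:
  "I1 b2 w \<theta>s As A *v d = (\<Sum>j\<in>UNIV. (w j * b2 (\<theta>s \<bullet> As j) * (A j \<bullet> d)) *\<^sub>R A j)"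
  unfolding I1_def
  apply (simp add: vec_eq_iff matrix_vector_mult_def inner_vec_def sum_distrib_left
      sum_distrib_right mult.assoc mult.left_commute sum_component)
  apply (rule allI, subst sum.swap, rule sum.cong, simp, rule sum.cong, simp, simp add: ac_simps)
  done

lemma score_decomposition:
  assumes "\<phi> \<noteq> 0"
  shows "I1 b2 w \<theta>s As A *v (\<theta> - \<theta>s) + \<phi> *\<^sub>R S1 \<phi> b1 w y A \<theta>
    = ZOA b1 w y \<theta>s As A - B1 b2 w \<theta>s As A - score_remainder b1 b2 w \<theta>s As A \<theta>"
proof -
  have "I1 b2 w \<theta>s As A *v (\<theta> - \<theta>s) + \<phi> *\<^sub>R S1 \<phi> b1 w y A \<theta>
      = (\<Sum>j\<in>UNIV. (w j * b2 (\<theta>s \<bullet> As j) * (A j \<bullet> (\<theta> - \<theta>s)) + w j * (y j - b1 (A j \<bullet> \<theta>))) *\<^sub>R A j)"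
    using assms by (simp add: I1_mult_vector S1_def sum.distrib scaleR_add_left)
  also have "\<dots> = (\<Sum>j\<in>UNIV. ((y j - b1 (\<theta>s \<bullet> As j)) * w j
         - w j * b2 (\<theta>s \<bullet> As j) * ((A j - As j) \<bullet> \<theta>s)
         - w j * (b1 (A j \<bullet> \<theta>) - b1 (\<theta>s \<bullet> As j) - b2 (\<theta>s \<bullet> As j) * (A j \<bullet> \<theta> - \<theta>s \<bullet> As j))) *\<^sub>R A j)"
    by (intro sum.cong refl arg_cong2[where f = scaleR])
      (simp add: inner_diff_left inner_diff_right inner_commute algebra_simps)
  also have "\<dots> = ZOA b1 w y \<theta>s As A - B1 b2 w \<theta>s As A - score_remainder b1 b2 w \<theta>s As A \<theta>"
    unfolding ZOA_def B1_def score_remainder_def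
    by (simp add: sum_subtractf[symmetric] scaleR_diff_left)
  finally show ?thesis .
qed

lemma continuous_on_S1:
  assumes "continuous_on UNIV b1"
  shows "continuous_on T (S1 \<phi> b1 w y A)"
proof -
  have "continuous_on T (\<lambda>\<theta>. b1 (A j \<bullet> \<theta>))" for j
    by (rule continuous_on_compose2[OF assms]) (intro continuous_intros, auto)
  then show ?thesis unfolding S1_def by (intro continuous_intros)
qed

lemma abs_score_remainder_coeff_le:
  fixes a d :: real
  assumes db1: "\<And>x. (b1 has_real_derivative b2 x) (at x)"
    and db2: "\<And>x. (b2 has_real_derivative b3 x) (at x)"
    and cont: "continuous_on UNIV b3"
    and x: "\<bar>m + a + d\<bar> \<le> \<alpha>" and m: "\<bar>m\<bar> \<le> \<alpha>"
  shows "\<bar>b1 (m + a + d) - b1 m - b2 m * (m + a + d - m)\<bar> \<le> kappa3 b3 \<alpha> * (a\<^sup>2 + d\<^sup>2)"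
proof -
  have K: "\<bar>b3 t\<bar> \<le> kappa3 b3 \<alpha>" if "\<bar>t\<bar> \<le> \<alpha>" for t
    using that by (intro abs_le_kappa3 continuous_on_subset[OF cont]) auto
  have "\<bar>b1 (m + a + d) - b1 m - b2 m * (m + a + d - m)\<bar> \<le> kappa3 b3 \<alpha> / 2 * (a + d)\<^sup>2"
    using abs_taylor_remainder_le[OF db1 db2 x m K] by simp
  also have "\<dots> \<le> kappa3 b3 \<alpha> / 2 * (2 * (a\<^sup>2 + d\<^sup>2))"
    using K[of m] m zero_le_power2[of "a - d"]
    by (intro mult_left_mono) (auto simp: power2_eq_square algebra_simps)
  also have "\<dots> = kappa3 b3 \<alpha> * (a\<^sup>2 + d\<^sup>2)" by simp
  finally show ?thesis .
qed

lemma norm_score_remainder_le: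
  fixes A As :: "'p::finite \<Rightarrow> real^'r::finite"
  assumes db1: "\<And>x. (b1 has_real_derivative b2 x) (at x)"
    and db2: "\<And>x. (b2 has_real_derivative b3 x) (at x)"
    and cont: "continuous_on UNIV b3"
    and w: "\<And>j. w j \<ge> 0"
    and \<theta>s: "norm \<theta>s \<le> C1" and \<delta>: "norm (\<theta> - \<theta>s) \<le> C1"
    and As: "\<And>j. norm (As j) \<le> C2" and A: "\<And>j. norm (A j) \<le> C2"
  shows "norm (score_remainder b1 b2 w \<theta>s As A \<theta>)
    \<le> kappa3 b3 (3 * C1 * C2) * (gamma1 w A * (norm (\<theta> - \<theta>s))\<^sup>2 + beta1 w \<theta>s As A)"
proof (rule norm_le_if_abs_inner_unit_le)
  fix u :: "real^'r" assume u: "norm u = 1"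
  define \<kappa> where "\<kappa> = kappa3 b3 (3 * C1 * C2)"
  define r where "r j = b1 (A j \<bullet> \<theta>) - b1 (\<theta>s \<bullet> As j) - b2 (\<theta>s \<bullet> As j) * (A j \<bullet> \<theta> - \<theta>s \<bullet> As j)" for j
  have C: "0 \<le> C1" "0 \<le> C2" using \<theta>s As[of undefined] norm_ge_zero order_trans by blast+
  have \<kappa>0: "\<kappa> \<ge> 0"
    unfolding \<kappa>_def using C by (intro kappa3_nonneg continuous_on_subset[OF cont]) auto
  have r: "\<bar>r j\<bar> \<le> \<kappa> * ((A j \<bullet> (\<theta> - \<theta>s))\<^sup>2 + ((A j - As j) \<bullet> \<theta>s)\<^sup>2)" for j
  proof -
    have split: "A j \<bullet> \<theta> = \<theta>s \<bullet> As j + A j \<bullet> (\<theta> - \<theta>s) + (A j - As j) \<bullet> \<theta>s"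
      by (simp add: inner_diff_left inner_diff_right inner_commute)
    have "\<bar>A j \<bullet> \<theta>\<bar> \<le> norm (A j) * norm \<theta>" by (rule Cauchy_Schwarz_ineq2)
    also have "\<dots> \<le> C2 * (C1 + C1)"
      using A[of j] \<theta>s \<delta> C norm_triangle_sub[of \<theta> \<theta>s] by (intro mult_mono) auto
    also have "\<dots> \<le> 3 * C1 * C2" using C by (simp add: algebra_simps)
    finally have x: "\<bar>A j \<bullet> \<theta>\<bar> \<le> 3 * C1 * C2" .
    have "\<bar>\<theta>s \<bullet> As j\<bar> \<le> norm \<theta>s * norm (As j)" by (rule Cauchy_Schwarz_ineq2)
    also have "\<dots> \<le> C1 * C2" using As[of j] \<theta>s C by (intro mult_mono) auto
    also have "\<dots> \<le> 3 * C1 * C2" using C by simp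
    finally have m: "\<bar>\<theta>s \<bullet> As j\<bar> \<le> 3 * C1 * C2" .
    show ?thesis
      using abs_score_remainder_coeff_le[OF db1 db2 cont x[unfolded split] m]
      unfolding r_def \<kappa>_def split[symmetric] by simp
  qed
  have "\<bar>score_remainder b1 b2 w \<theta>s As A \<theta> \<bullet> u\<bar> = \<bar>\<Sum>j\<in>UNIV. w j * r j * (A j \<bullet> u)\<bar>"
    by (simp add: score_remainder_def r_def inner_sum_left)
  also have "\<dots> \<le> (\<Sum>j\<in>UNIV. \<bar>w j * r j * (A j \<bullet> u)\<bar>)" by (rule sum_abs)
  also have "\<dots> \<le> (\<Sum>j\<in>UNIV. \<kappa> * (w j * (A j \<bullet> (\<theta> - \<theta>s))\<^sup>2 * \<bar>A j \<bullet> u\<bar>)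
                        + \<kappa> * (w j * ((A j - As j) \<bullet> \<theta>s)\<^sup>2 * \<bar>A j \<bullet> u\<bar>))"
  proof (rule sum_mono)
    fix j
    have "\<bar>w j * r j * (A j \<bullet> u)\<bar> = (w j * \<bar>A j \<bullet> u\<bar>) * \<bar>r j\<bar>"
      using w[of j] by (simp add: abs_mult)
    also have "\<dots> \<le> (w j * \<bar>A j \<bullet> u\<bar>) * (\<kappa> * ((A j \<bullet> (\<theta> - \<theta>s))\<^sup>2 + ((A j - As j) \<bullet> \<theta>s)\<^sup>2))"
      using w[of j] by (intro mult_left_mono r) simp
    finally show "\<bar>w j * r j * (A j \<bullet> u)\<bar> \<le> \<kappa> * (w j * (A j \<bullet> (\<theta> - \<theta>s))\<^sup>2 * \<bar>A j \<bullet> u\<bar>)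
                        + \<kappa> * (w j * ((A j - As j) \<bullet> \<theta>s)\<^sup>2 * \<bar>A j \<bullet> u\<bar>)"
      by (simp add: algebra_simps)
  qed
  also have "\<dots> \<le> \<kappa> * (gamma1 w A * (norm (\<theta> - \<theta>s))\<^sup>2) + \<kappa> * beta1 w \<theta>s As A"
    unfolding sum.distrib sum_distrib_left[symmetric]
    using sum_inner_sq_le_gamma1[of w u A, OF w u] sum_le_beta1[of w u A As \<theta>s, OF w u] \<kappa>0
    by (intro add_mono mult_left_mono) auto
  finally show "\<bar>score_remainder b1 b2 w \<theta>s As A \<theta> \<bullet> u\<bar>
      \<le> kappa3 b3 (3 * C1 * C2) * (gamma1 w A * (norm (\<theta> - \<theta>s))\<^sup>2 + beta1 w \<theta>s As A)"
    by (simp add: \<kappa>_def algebra_simps)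
qed

section \<open>Existence of a root near \<open>\<theta>\<^sup>*\<close>\<close>

lemma linear_plus_perturbation_has_zero:
  fixes f S :: "'a::euclidean_space \<Rightarrow> 'a"
  assumes f: "linear f" and \<sigma>: "\<sigma> > 0" and lower: "\<And>x. \<sigma> * norm x \<le> norm (f x)"
    and S: "continuous_on (cball 0 \<rho>) S" and \<rho>: "\<rho> \<ge> 0"
    and small: "\<And>\<delta>. norm \<delta> \<le> \<rho> \<Longrightarrow> norm (f \<delta> + S \<delta>) \<le> \<sigma> * \<rho>"
  shows "\<exists>\<delta>. norm \<delta> \<le> \<rho> \<and> S \<delta> = 0"
proof -
  have "inj f"
  proof (rule injI)
    fix x x' assume "f x = f x'"
    then have "\<sigma> * norm (x - x') \<le> 0" using lower[of "x - x'"] f by (simp add: linear_diff)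
    then show "x = x'" using \<sigma> by (simp add: mult_le_0_iff)
  qed
  then have "surj f" using linear_injective_imp_surjective f by blast
  then obtain g where g: "linear g" and "f \<circ> g = id"
    using linear_surjective_right_inverse[OF f] by blast
  then have fg: "f (g z) = z" for z by (metis comp_apply id_apply)
  define F where "F \<delta> = \<delta> + g (S \<delta>)" for \<delta>
  have "F \<delta> \<in> cball 0 \<rho>" if "\<delta> \<in> cball 0 \<rho>" for \<delta>
  proof -
    have "\<sigma> * norm (F \<delta>) \<le> norm (f \<delta> + S \<delta>)"
      using lower[of "F \<delta>"] f by (simp add: F_def fg linear_add)
    also have "\<dots> \<le> \<sigma> * \<rho>" using that by (intro small) simp
    finally show ?thesis using \<sigma> by simp
  qed
  moreover have "continuous_on (cball 0 \<rho>) F"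
    unfolding F_def using g
    by (intro continuous_intros continuous_on_compose2[OF _ S, of UNIV] linear_continuous_on)
      (auto simp: linear_conv_bounded_linear)
  ultimately obtain \<delta> where "\<delta> \<in> cball 0 \<rho>" "F \<delta> = \<delta>"
    using brouwer[of "cball 0 \<rho>" F] \<rho> by auto
  moreover have "S \<delta> = f (g (S \<delta>))" by (rule fg[symmetric])
  ultimately show ?thesis using f by (auto simp: F_def linear_0)
qed

lemma quadratic_radius_le:
  fixes \<sigma> E c :: real
  assumes \<sigma>: "\<sigma> > 0" and E: "E \<ge> 0" and c: "c \<ge> 0"
    and small: "c \<noteq> 0 \<Longrightarrow> E \<le> \<sigma>\<^sup>2 / (4 * c)"
    and t: "\<bar>t\<bar> \<le> 2 / \<sigma> * E"
  shows "E + c * t\<^sup>2 \<le> \<sigma> * (2 / \<sigma> * E)"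
proof (cases "c = 0")
  case False
  then have "4 * c * E \<le> \<sigma>\<^sup>2" using small c by (simp add: le_divide_eq algebra_simps)
  have "c * (2 / \<sigma> * E)\<^sup>2 = E * (4 * c * E) / \<sigma>\<^sup>2"
    using \<sigma> by (simp add: power2_eq_square field_simps)
  also have "\<dots> \<le> E * \<sigma>\<^sup>2 / \<sigma>\<^sup>2"
    using \<open>4 * c * E \<le> \<sigma>\<^sup>2\<close> E by (intro divide_right_mono mult_left_mono) auto
  finally have "c * (2 / \<sigma> * E)\<^sup>2 \<le> E" using \<sigma> by simp
  moreover have "c * t\<^sup>2 \<le> c * (2 / \<sigma> * E)\<^sup>2"
    using t c \<sigma> E by (intro mult_left_mono) (auto simp: abs_le_square_iff[symmetric])
  ultimately show ?thesis using \<sigma> by simp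
qed (use \<sigma> E in simp)

lemma norm_score_equation_le:
  fixes A As :: "'p::finite \<Rightarrow> real^'r::finite"
  assumes "\<phi> \<noteq> 0"
    and "\<And>x. (b1 has_real_derivative b2 x) (at x)"
    and "\<And>x. (b2 has_real_derivative b3 x) (at x)"
    and "continuous_on UNIV b3"
    and "\<And>j. w j \<ge> 0"
    and "norm \<theta>s \<le> C1" and "norm (\<theta> - \<theta>s) \<le> C1"
    and "\<And>j. norm (As j) \<le> C2" and "\<And>j. norm (A j) \<le> C2"
  shows "norm (I1 b2 w \<theta>s As A *v (\<theta> - \<theta>s) + \<phi> *\<^sub>R S1 \<phi> b1 w y A \<theta>)
    \<le> norm (ZOA b1 w y \<theta>s As A) + norm (B1 b2 w \<theta>s As A) + beta1 w \<theta>s As A * kappa3 b3 (3 * C1 * C2)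
       + gamma1 w A * kappa3 b3 (3 * C1 * C2) * (norm (\<theta> - \<theta>s))\<^sup>2"
proof -
  let ?R = "score_remainder b1 b2 w \<theta>s As A \<theta>"
  have "norm (I1 b2 w \<theta>s As A *v (\<theta> - \<theta>s) + \<phi> *\<^sub>R S1 \<phi> b1 w y A \<theta>)
      = norm (ZOA b1 w y \<theta>s As A - B1 b2 w \<theta>s As A - ?R)"
    by (simp only: score_decomposition[OF assms(1)])
  also have "\<dots> \<le> norm (ZOA b1 w y \<theta>s As A) + norm (B1 b2 w \<theta>s As A) + norm ?R"
    by (meson norm_triangle_ineq4 add_right_mono order_trans)
  also have "\<dots> \<le> norm (ZOA b1 w y \<theta>s As A) + norm (B1 b2 w \<theta>s As A)
      + kappa3 b3 (3 * C1 * C2) * (gamma1 w A * (norm (\<theta> - \<theta>s))\<^sup>2 + beta1 w \<theta>s As A)"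
    using norm_score_remainder_le[OF assms(2-)] by simp
  finally show ?thesis by (simp add: algebra_simps)
qed

theorem mainTheorem10:
  fixes \<phi> C1 C2 :: real
    and b b1 b2 b3 :: "real \<Rightarrow> real"
    and Theta :: "'n::finite \<Rightarrow> real^'r::finite"
    and As A :: "'p::finite \<Rightarrow> real^'r"
    and y \<omega> :: "'n \<Rightarrow> 'p \<Rightarrow> real"
    and i :: 'n
  assumes phi_pos: "\<phi> > 0"
    and db: "\<And>x. (b has_real_derivative b1 x) (at x)"
    and db1: "\<And>x. (b1 has_real_derivative b2 x) (at x)"
    and db2: "\<And>x. (b2 has_real_derivative b3 x) (at x)"
    and cont_b3: "continuous_on UNIV b3"
    and b2_pos: "\<And>x. b2 x > 0"
    and omega01: "\<And>k j. \<omega> k j \<in> {0, 1}"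
    and C1_pos: "C1 > 0" and C2_pos: "C2 > 0"
    and Theta_bd: "two_to_inf Theta \<le> C1"
    and As_bd: "two_to_inf As \<le> C2"
    and A_bd: "two_to_inf A \<le> C2"
    and sigma_pos: "sigma_min (I1 b2 (\<omega> i) (Theta i) As A) > 0"
    and small1: "norm (ZOA b1 (\<omega> i) (y i) (Theta i) As A) + norm (B1 b2 (\<omega> i) (Theta i) As A)
                 + beta1 (\<omega> i) (Theta i) As A * kappa3 b3 (3 * C1 * C2)
               \<le> sigma_min (I1 b2 (\<omega> i) (Theta i) As A) * C1 / 2"
    and small2: "gamma1 (\<omega> i) A * kappa3 b3 (3 * C1 * C2) \<noteq> 0 \<Longrightarrow>
               norm (ZOA b1 (\<omega> i) (y i) (Theta i) As A) + norm (B1 b2 (\<omega> i) (Theta i) As A)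
                 + beta1 (\<omega> i) (Theta i) As A * kappa3 b3 (3 * C1 * C2)
               \<le> (sigma_min (I1 b2 (\<omega> i) (Theta i) As A))\<^sup>2
                  / (4 * gamma1 (\<omega> i) A * kappa3 b3 (3 * C1 * C2))"
  shows "\<exists>\<theta>. S1 \<phi> b1 (\<omega> i) (y i) A \<theta> = 0
          \<and> norm (\<theta> - Theta i) \<le> 2 / sigma_min (I1 b2 (\<omega> i) (Theta i) As A)
               * (norm (ZOA b1 (\<omega> i) (y i) (Theta i) As A) + norm (B1 b2 (\<omega> i) (Theta i) As A)
                  + beta1 (\<omega> i) (Theta i) As A * kappa3 b3 (3 * C1 * C2))
          \<and> norm (\<theta> - Theta i) \<le> C1"
proof -
  define \<sigma> where "\<sigma> = sigma_min (I1 b2 (\<omega> i) (Theta i) As A)"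
  define \<kappa> where "\<kappa> = kappa3 b3 (3 * C1 * C2)"
  define E where "E = norm (ZOA b1 (\<omega> i) (y i) (Theta i) As A) + norm (B1 b2 (\<omega> i) (Theta i) As A)
                      + beta1 (\<omega> i) (Theta i) As A * \<kappa>"
  define \<rho> where "\<rho> = 2 / \<sigma> * E"
  have w: "\<And>j. \<omega> i j \<ge> 0" using omega01 by (metis insert_iff order_refl singletonD zero_le_one)
  have norms: "norm (Theta i) \<le> C1" "\<And>j. norm (As j) \<le> C2" "\<And>j. norm (A j) \<le> C2"
    using norm_le_two_to_inf Theta_bd As_bd A_bd order_trans by blast+
  have \<kappa>: "\<kappa> \<ge> 0"
    unfolding \<kappa>_def using C1_pos C2_pos by (intro kappa3_nonneg continuous_on_subset[OF cont_b3]) auto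
  have E: "E \<ge> 0" unfolding E_def by (intro add_nonneg_nonneg mult_nonneg_nonneg norm_ge_zero beta1_nonneg w \<kappa>)
  have \<sigma>: "\<sigma> > 0" using sigma_pos by (simp add: \<sigma>_def)
  have \<rho>C1: "\<rho> \<le> C1" using small1 \<sigma> by (simp add: \<rho>_def E_def \<sigma>_def \<kappa>_def field_simps)
  have cont_b1: "continuous_on UNIV b1"
    using db1 by (meson DERIV_isCont continuous_at_imp_continuous_on)
  have "\<exists>\<delta>. norm \<delta> \<le> \<rho> \<and> \<phi> *\<^sub>R S1 \<phi> b1 (\<omega> i) (y i) A (Theta i + \<delta>) = 0"
  proof (rule linear_plus_perturbation_has_zero[OF matrix_vector_mul_linear \<sigma>])
    show "\<sigma> * norm x \<le> norm (I1 b2 (\<omega> i) (Theta i) As A *v x)" for x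
      unfolding \<sigma>_def by (rule sigma_min_mult_le_norm)
    show "continuous_on (cball 0 \<rho>) (\<lambda>\<delta>. \<phi> *\<^sub>R S1 \<phi> b1 (\<omega> i) (y i) A (Theta i + \<delta>))"
      by (intro continuous_intros continuous_on_compose2[OF continuous_on_S1[OF cont_b1]]) auto
    show "\<rho> \<ge> 0" unfolding \<rho>_def using \<sigma> E by simp
    fix \<delta> :: "real^'r" assume \<delta>: "norm \<delta> \<le> \<rho>"
    have "norm (I1 b2 (\<omega> i) (Theta i) As A *v \<delta> + \<phi> *\<^sub>R S1 \<phi> b1 (\<omega> i) (y i) A (Theta i + \<delta>))
        \<le> E + gamma1 (\<omega> i) A * \<kappa> * (norm \<delta>)\<^sup>2"
      using norm_score_equation_le[of \<phi> b1 b2 b3 "\<omega> i" "Theta i" C1 "Theta i + \<delta>" As C2 A "y i"]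
        phi_pos db1 db2 cont_b3 w norms \<delta> \<rho>C1 by (simp add: E_def \<kappa>_def)
    also have "\<dots> \<le> \<sigma> * \<rho>"
      using \<sigma> E \<kappa> gamma1_nonneg[of "\<omega> i", OF w] \<delta> unfolding \<rho>_def
    proof (intro quadratic_radius_le mult_nonneg_nonneg)
      show "E \<le> \<sigma>\<^sup>2 / (4 * (gamma1 (\<omega> i) A * \<kappa>))" if "gamma1 (\<omega> i) A * \<kappa> \<noteq> 0"
        using small2[OF that[unfolded \<kappa>_def]] unfolding E_def \<sigma>_def \<kappa>_def by (simp only: mult.assoc)
    qed auto
    finally show "norm (I1 b2 (\<omega> i) (Theta i) As A *v \<delta> + \<phi> *\<^sub>R S1 \<phi> b1 (\<omega> i) (y i) A (Theta i + \<delta>))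
        \<le> \<sigma> * \<rho>" .
  qed
  then obtain \<delta> where "norm \<delta> \<le> \<rho>" "S1 \<phi> b1 (\<omega> i) (y i) A (Theta i + \<delta>) = 0"
    using phi_pos by auto
  then show ?thesis
    using \<rho>C1 by (intro exI[of _ "Theta i + \<delta>"]) (simp add: \<rho>_def E_def \<sigma>_def \<kappa>_def)
qed

end
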